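(* Let $\mathbb{R}^3$ carry the Euclidean dot product $\cdot$, cross product $\times$ and norm $|\cdot|$. For $\mathbf r\neq \mathbf 0$ and $\mathbf u,\mathbf w\in\mathbb{R}^3$ define $$\mathbf f(\mathbf r,\mathbf u,\mathbf w)\triangleq\Big(\mathbf w\cdot\tfrac{\mathbf r}{|\mathbf r|}\Big)\mathbf u+\Big(\mathbf u\cdot\tfrac{\mathbf r}{|\mathbf r|}\Big)\mathbf w+\Big[(\mathbf u\cdot\mathbf w)-5\Big(\mathbf u\cdot\tfrac{\mathbf r}{|\mathbf r|}\Big)\Big(\mathbf w\cdot\tfrac{\mathbf r}{|\mathbf r|}\Big)\Big]\tfrac{\mathbf r}{|\mathbf r|}.$$ For $\mathbf r\neq\mathbf 0$ and $\mathbf f^*\in\mathbb{R}^3$ define $$\Phi_1(\mathbf r,\mathbf f^* )\triangleq\sqrt{|\mathbf r\times\mathbf f^*|^2+|\mathbf r|^2|\mathbf f^*|^2},\qquad \Phi_2(\mathbf r,\mathbf f^* )\triangleq\big(2-\operatorname{sgn}(\mathbf r\cdot\mathbf f^* )^2\big)\Phi_1(\mathbf r,\mathbf f^* ),$$ $$g_{\mathrm r}\triangleq-\frac{\operatorname{sgn}(\mathbf r\cdot\mathbf f^* )}{2}\Big(\frac{|\mathbf r\cdot\mathbf f^*|+\Phi_1}{|\mathbf r|}\Big)^{1/2},\qquad g_{\mathrm{rf}}\triangleq\frac{1}{\sqrt2}\Big(\frac{-|\mathbf r\cdot\mathbf f^*|+\Phi_2}{|\mathbf r|}\Big)^{1/2},$$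 $$h_{\mathrm r}\triangleq\frac12\Big(\frac{|\mathbf r\cdot\mathbf f^*|+\Phi_2}{|\mathbf r|}\Big)^{1/2},\qquad h_{\mathrm{rf}}\triangleq-\frac{\operatorname{sgn}(\mathbf r\cdot\mathbf f^* )}{\sqrt2}\Big(\frac{-|\mathbf r\cdot\mathbf f^*|+\Phi_1}{|\mathbf r|}\Big)^{1/2},$$ where all of these are evaluated at $(\mathbf r,\mathbf f^* )$. Define $$\mathbf g(\mathbf r,\mathbf f^* )\triangleq\begin{cases}\frac{g_{\mathrm r}}{|\mathbf r|}\mathbf r+\frac{g_{\mathrm{rf}}}{|\mathbf r||\mathbf r\times\mathbf f^*|}\big((\mathbf r\times\mathbf f^* )\times\mathbf r\big), & \mathbf r\times\mathbf f^*\neq\mathbf 0,\\ \frac{g_{\mathrm r}}{|\mathbf r|}\mathbf r, & \mathbf r\times\mathbf f^*=\mathbf 0,\end{cases}$$ $$\mathbf h(\mathbf r,\mathbf f^* )\triangleq\begin{cases}\frac{h_{\mathrm r}}{|\mathbf r|}\mathbf r+\frac{h_{\mathrm{rf}}}{|\mathbf r||\mathbf r\times\mathbf f^*|}\big((\mathbf r\times\mathbf f^* )\times\mathbf r\big), & \mathbf r\times\mathbf f^*\neq\mathbf 0,\\ \frac{h_{\mathrm r}}{|\mathbf r|}\mathbf r, & \mathbf r\times\mathbf f^*=\mathbf 0.\end{cases}$$ Then for all $\mathbf f^*\in\mathbb{R}^3$ and all $\mathbf r\in\mathbb{R}^3$ with $\mathbf r\neq\mathbf 0$, $$\mathbf f\big(\mathbf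 r,\mathbf g(\mathbf r,\mathbf f^* ),\mathbf h(\mathbf r,\mathbf f^* )\big)=\mathbf f^*.$$
   Context: $\operatorname{sgn}$ denotes the sign function with $\operatorname{sgn}(x)=1$ for $x>0$, $\operatorname{sgn}(x)=-1$ for $x<0$, and $\operatorname{sgn}(0)=0$; square roots are nonnegative real square roots. The function $\mathbf f$ is (up to a positive factor) the magnetic dipole–dipole force exerted on a dipole of moment $\mathbf u$ at relative position $\mathbf r$ by a dipole of moment $\mathbf w$; $\mathbf g,\mathbf h$ give a pair of dipole amplitudes producing a prescribed force value $\mathbf f^*$. *)

theory Defs
  imports "HOL-Analysis.Analysis"
begin

definition dip_f :: "real^3 \<Rightarrow> real^3 \<Rightarrow> real^3 \<Rightarrow> real^3" where
  "dip_f r u w = (let e = (1 / norm r) *\<^sub>R r in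
     (w \<bullet> e) *\<^sub>R u + (u \<bullet> e) *\<^sub>R w + ((u \<bullet> w) - 5 * (u \<bullet> e) * (w \<bullet> e)) *\<^sub>R e)"

definition Phi1 :: "real^3 \<Rightarrow> real^3 \<Rightarrow> real" where
  "Phi1 r fs = sqrt ((norm (cross3 r fs))\<^sup>2 + (norm r)\<^sup>2 * (norm fs)\<^sup>2)"

definition Phi2 :: "real^3 \<Rightarrow> real^3 \<Rightarrow> real" where
  "Phi2 r fs = (2 - (sgn (r \<bullet> fs))\<^sup>2) * Phi1 r fs"

definition g_r :: "real^3 \<Rightarrow> real^3 \<Rightarrow> real" where
  "g_r r fs = - (sgn (r \<bullet> fs) / 2) * sqrt ((\<bar>r \<bullet> fs\<bar> + Phi1 r fs) / norm r)"

definition g_rf :: "real^3 \<Rightarrow> real^3 \<Rightarrow> real" where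
  "g_rf r fs = (1 / sqrt 2) * sqrt ((- \<bar>r \<bullet> fs\<bar> + Phi2 r fs) / norm r)"

definition h_r :: "real^3 \<Rightarrow> real^3 \<Rightarrow> real" where
  "h_r r fs = (1 / 2) * sqrt ((\<bar>r \<bullet> fs\<bar> + Phi2 r fs) / norm r)"

definition h_rf :: "real^3 \<Rightarrow> real^3 \<Rightarrow> real" where
  "h_rf r fs = - (sgn (r \<bullet> fs) / sqrt 2) * sqrt ((- \<bar>r \<bullet> fs\<bar> + Phi1 r fs) / norm r)"

definition dip_g :: "real^3 \<Rightarrow> real^3 \<Rightarrow> real^3" where
  "dip_g r fs = (if cross3 r fs \<noteq> 0
     then (g_r r fs / norm r) *\<^sub>R r
          + (g_rf r fs / (norm r * norm (cross3 r fs))) *\<^sub>R cross3 (cross3 r fs) r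
     else (g_r r fs / norm r) *\<^sub>R r)"

definition dip_h :: "real^3 \<Rightarrow> real^3 \<Rightarrow> real^3" where
  "dip_h r fs = (if cross3 r fs \<noteq> 0
     then (h_r r fs / norm r) *\<^sub>R r
          + (h_rf r fs / (norm r * norm (cross3 r fs))) *\<^sub>R cross3 (cross3 r fs) r
     else (h_r r fs / norm r) *\<^sub>R r)"

end

theory Submission
  imports Defs
begin

(* With e = r/|r| and t a unit vector orthogonal to r, the force between dipoles
   u1 e + u2 t and w1 e + w2 t is (u2 w2 - 2 u1 w1) e + (u1 w2 + u2 w1) t.  Choosing t along
   the component of f* orthogonal to r gives f* = a e + b t with a = r.f*/|r| and
   b = |r x f*|/|r| >= 0, so the amplitudes only have to solve these two bilinear equations.
   With P = sqrt (a^2 + 2 b^2), X = sqrt (|a| + P) and Y = sqrt (P - |a|) one has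
   X^2 - Y^2 = 2 |a| and X Y = sqrt 2 b, which is exactly what the given amplitudes use. *)

lemma cross3_cross3_self_right: "cross3 (cross3 r f) r = (r \<bullet> r) *\<^sub>R f - (r \<bullet> f) *\<^sub>R r"
  by (simp add: cross3_simps forall_3)

lemma norm_cross3_cross3_self_right: "norm (cross3 (cross3 r f) r) = norm (cross3 r f) * norm r"
  using norm_cross_dot[of "cross3 r f" r] by (simp add: dot_cross_self inner_commute)

lemma Phi1_eq: "Phi1 r f = sqrt ((r \<bullet> f)\<^sup>2 + 2 * (norm (cross3 r f))\<^sup>2)"
  using norm_cross_dot[of r f] unfolding Phi1_def by (simp add: algebra_simps)

lemma dip_f_eq_sgn:
  "dip_f r u w = (w \<bullet> sgn r) *\<^sub>R u + (u \<bullet> sgn r) *\<^sub>R w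
                 + (u \<bullet> w - 5 * (u \<bullet> sgn r) * (w \<bullet> sgn r)) *\<^sub>R sgn r"
  by (simp add: dip_f_def sgn_div_norm divide_inverse_commute)

lemma dip_f_orthonormal_frame:
  fixes r t :: "real^3"
  assumes "r \<noteq> 0" "norm t = 1" "r \<bullet> t = 0"
  shows "dip_f r (u1 *\<^sub>R sgn r + u2 *\<^sub>R t) (w1 *\<^sub>R sgn r + w2 *\<^sub>R t)
       = (u2 * w2 - 2 * u1 * w1) *\<^sub>R sgn r + (u1 * w2 + u2 * w1) *\<^sub>R t"
proof -
  have "sgn r \<bullet> sgn r = 1" "t \<bullet> t = 1"
    using assms by (simp_all add: norm_eq_1[symmetric] norm_sgn)
  moreover have "sgn r \<bullet> t = 0" "t \<bullet> sgn r = 0"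
    using assms by (simp_all add: sgn_div_norm inner_commute)
  ultimately show ?thesis
    unfolding dip_f_eq_sgn by (simp add: vec_eq_iff algebra_simps)
qed

lemma dip_f_radial:
  fixes r :: "real^3"
  assumes "r \<noteq> 0"
  shows "dip_f r (u *\<^sub>R sgn r) (w *\<^sub>R sgn r) = (- 2 * u * w) *\<^sub>R sgn r"
proof -
  have "sgn r \<bullet> sgn r = 1" using assms by (simp add: norm_eq_1[symmetric] norm_sgn)
  then show ?thesis unfolding dip_f_eq_sgn by (simp add: vec_eq_iff algebra_simps)
qed

(* Since sgn 0 = 0, this also covers f parallel to r, and the next two lemmas absorb the
   case distinction in the definitions of dip_g and dip_h. *)
lemma radial_transverse_decomposition:
  fixes r f :: "real^3"
  assumes "r \<noteq> 0"
  shows "f = (r \<bullet> f / norm r) *\<^sub>R sgn r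
           + (norm (cross3 r f) / norm r) *\<^sub>R sgn (cross3 (cross3 r f) r)"
    (is "f = ?d")
proof -
  have norm_sgn_scale: "norm v *\<^sub>R sgn v = v" for v :: "real^3"
    by (cases "v = 0") (simp_all add: sgn_div_norm)
  have "(norm r)\<^sup>2 *\<^sub>R ?d = (r \<bullet> f) *\<^sub>R r + cross3 (cross3 r f) r"
    using assms norm_sgn_scale[of r] norm_sgn_scale[of "cross3 (cross3 r f) r"]
    by (simp add: norm_cross3_cross3_self_right power2_eq_square scaleR_add_right)
       (metis mult.commute scaleR_scaleR)
  also have "\<dots> = (norm r)\<^sup>2 *\<^sub>R f"
    by (simp add: cross3_cross3_self_right power2_norm_eq_inner)
  finally show ?thesis using assms by simp
qed

lemma dip_g_eq: "dip_g r f = g_r r f *\<^sub>R sgn r + g_rf r f *\<^sub>R sgn (cross3 (cross3 r f) r)"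
  by (simp add: dip_g_def sgn_div_norm norm_cross3_cross3_self_right divide_inverse_commute
      mult.commute)

lemma dip_h_eq: "dip_h r f = h_r r f *\<^sub>R sgn r + h_rf r f *\<^sub>R sgn (cross3 (cross3 r f) r)"
  by (simp add: dip_h_def sgn_div_norm norm_cross3_cross3_self_right divide_inverse_commute
      mult.commute)

lemma amplitude_products:
  fixes d c n :: real
  assumes "n > 0" "c \<ge> 0"
  defines "\<Phi> \<equiv> sqrt (d\<^sup>2 + 2 * c\<^sup>2)"
  defines "\<Psi> \<equiv> (2 - (sgn d)\<^sup>2) * \<Phi>"
  defines "gr \<equiv> - (sgn d / 2) * sqrt ((\<bar>d\<bar> + \<Phi>) / n)"
    and "grf \<equiv> (1 / sqrt 2) * sqrt ((- \<bar>d\<bar> + \<Psi>) / n)"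
    and "hr \<equiv> (1 / 2) * sqrt ((\<bar>d\<bar> + \<Psi>) / n)"
    and "hrf \<equiv> - (sgn d / sqrt 2) * sqrt ((- \<bar>d\<bar> + \<Phi>) / n)"
  shows "grf * hrf - 2 * gr * hr = d / n" and "gr * hrf + grf * hr = c / n"
proof -
  have d_le_\<Phi>: "\<bar>d\<bar> \<le> \<Phi>"
    unfolding \<Phi>_def
    by (metis real_sqrt_abs real_sqrt_le_mono le_add_same_cancel1 mult_nonneg_nonneg
        zero_le_numeral zero_le_power2)
  have sqrt_square: "sqrt (x / n) * sqrt (x / n) = x / n" if "x \<ge> 0" for x
    using that assms(1) by simp
  have sqrt_product: "sqrt ((\<bar>d\<bar> + \<Phi>) / n) * sqrt ((- \<bar>d\<bar> + \<Phi>) / n) = sqrt 2 * c / n"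
  proof -
    have "(\<bar>d\<bar> + \<Phi>) * (- \<bar>d\<bar> + \<Phi>) = 2 * c\<^sup>2"
      unfolding \<Phi>_def by (simp add: algebra_simps power2_eq_square)
    then show ?thesis
      using assms(1,2)
      by (simp add: real_sqrt_mult[symmetric] real_sqrt_divide) (simp add: real_sqrt_mult)
  qed
  have "grf * hrf - 2 * gr * hr = d / n \<and> gr * hrf + grf * hr = c / n"
  proof (cases "d = 0")
    case True
    then have "\<Phi> = sqrt 2 * c" using assms(2) by (simp add: \<Phi>_def real_sqrt_mult)
    then show ?thesis
      using True sqrt_square[of "2 * \<Phi>"] d_le_\<Phi> by (simp add: gr_def grf_def hr_def hrf_def \<Psi>_def)
  next
    case False
    then have "sgn d * sgn d = 1" by (simp add: sgn_if)
    moreover have "\<Psi> = \<Phi>" using calculation by (simp add: \<Psi>_def power2_eq_square)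
    ultimately show ?thesis
      using assms(1) sgn_mult_abs[of d] sqrt_square[of "\<bar>d\<bar> + \<Phi>"]
        sqrt_square[of "- \<bar>d\<bar> + \<Phi>"] d_le_\<Phi> sqrt_product
      by (simp add: gr_def grf_def hr_def hrf_def field_simps)
  qed
  then show "grf * hrf - 2 * gr * hr = d / n" "gr * hrf + grf * hr = c / n" by simp_all
qed

lemma dip_amplitude_products:
  fixes r f :: "real^3"
  assumes "r \<noteq> 0"
  shows "g_rf r f * h_rf r f - 2 * g_r r f * h_r r f = r \<bullet> f / norm r"
    and "g_r r f * h_rf r f + g_rf r f * h_r r f = norm (cross3 r f) / norm r"
  using amplitude_products[of "norm r" "norm (cross3 r f)" "r \<bullet> f"] assms
  by (simp_all add: g_r_def g_rf_def h_r_def h_rf_def Phi2_def Phi1_eq)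

lemma h_rf_cross3_eq_0: "cross3 r f = 0 \<Longrightarrow> h_rf r f = 0"
  by (simp add: h_rf_def Phi1_eq)

theorem proposition2:
  fixes r fs :: "real^3"
  assumes "r \<noteq> 0"
  shows "dip_f r (dip_g r fs) (dip_h r fs) = fs"
proof -
  let ?t = "sgn (cross3 (cross3 r fs) r)"
  have fs: "fs = (r \<bullet> fs / norm r) *\<^sub>R sgn r + (norm (cross3 r fs) / norm r) *\<^sub>R ?t"
    using assms by (rule radial_transverse_decomposition)
  show ?thesis
  proof (cases "cross3 r fs = 0")
    case True
    then have "dip_f r (dip_g r fs) (dip_h r fs) = (- 2 * g_r r fs * h_r r fs) *\<^sub>R sgn r"
      using assms by (simp add: dip_g_eq dip_h_eq dip_f_radial)
    also have "\<dots> = fs"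
      using fs dip_amplitude_products(1)[OF assms, of fs] h_rf_cross3_eq_0[OF True] True by simp
    finally show ?thesis .
  next
    case False
    have "cross3 (cross3 r fs) r \<noteq> 0"
      using False assms norm_cross3_cross3_self_right[of r fs] by auto
    then have "norm ?t = 1"
      by (simp add: norm_sgn)
    moreover have "r \<bullet> ?t = 0"
      by (simp add: sgn_div_norm dot_cross_self)
    ultimately have "dip_f r (dip_g r fs) (dip_h r fs) =
        (g_rf r fs * h_rf r fs - 2 * g_r r fs * h_r r fs) *\<^sub>R sgn r
        + (g_r r fs * h_rf r fs + g_rf r fs * h_r r fs) *\<^sub>R ?t"
      unfolding dip_g_eq dip_h_eq using assms by (simp add: dip_f_orthonormal_frame)
    also have "\<dots> = fs"
      using fs dip_amplitude_products[OF assms, of fs] by simp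
    finally show ?thesis .
  qed
qed

end
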